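(* Let $G$ be a group and let $S=\bigoplus_{g\in G}S_g$ be an epsilon-finitely $G$-graded ring. Then for every normal subgroup $N$ of $G$, the induced $G/N$-grading $\{S_C\}_{C\in G/N}$ is epsilon-finite (in particular epsilon-strong).
   Context: Rings are associative, not necessarily unital; $AB$ denotes finite sums of products. A grading $\{T_h\}_{h\in H}$ of a ring $T$ ($T=\bigoplus_hT_h$, $T_hT_k\subseteq T_{hk}$) is epsilon-strong if $T_hT_{h^{-1}}T_h=T_h$ for all $h$ and each ring $T_hT_{h^{-1}}$ has a multiplicative identity element $\epsilon_h$ (these are commuting idempotents). It is epsilon-finite if it is epsilon-strong and the set $\bigvee\{\epsilon_h\mid h\in H\}$ is finite, where for commuting idempotents $a\vee b=a+b-ab$ and $\bigvee F$ denotes the set of finite joins of elements of $F$. Induced grading: $S_C=\bigoplus_{g\in C}S_g$. *)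

theory Defs
  imports "HOL-Algebra.Coset"
begin

text \<open>Rings are elements of a type of class ring (associative, not necessarily unital).
  The ring S is the whole type. A grading by a group H is a family T indexed by the
  carrier of H.\<close>

definition ring_prodset :: "'a::ring set \<Rightarrow> 'a set \<Rightarrow> 'a set" where
  "ring_prodset A B = {\<Sum>i<n. a i * b i | (n::nat) a b. \<forall>i<n. a i \<in> A \<and> b i \<in> B}"

definition is_grading :: "('h, 'm) monoid_scheme \<Rightarrow> ('h \<Rightarrow> 'a::ring set) \<Rightarrow> bool" where
  "is_grading H T \<longleftrightarrow>
     (\<forall>h\<in>carrier H. 0 \<in> T h \<and> (\<forall>x\<in>T h. \<forall>y\<in>T h. x - y \<in> T h)) \<and>
     (\<forall>h\<in>carrier H. \<forall>k\<in>carrier H. \<forall>x\<in>T h. \<forall>y\<in>T k. x * y \<in> T (h \<otimes>\<^bsub>H\<^esub> k)) \<and>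
     (\<forall>x::'a. \<exists>F f. finite F \<and> F \<subseteq> carrier H \<and> (\<forall>h\<in>F. f h \<in> T h) \<and> x = (\<Sum>h\<in>F. f h)) \<and>
     (\<forall>F f. finite F \<and> F \<subseteq> carrier H \<and> (\<forall>h\<in>F. f h \<in> T h) \<and> (\<Sum>h\<in>F. f h) = 0
            \<longrightarrow> (\<forall>h\<in>F. f h = 0))"

definition is_identity_of :: "'a::ring \<Rightarrow> 'a set \<Rightarrow> bool" where
  "is_identity_of e A \<longleftrightarrow> e \<in> A \<and> (\<forall>x\<in>A. e * x = x \<and> x * e = x)"

definition eps :: "('h, 'm) monoid_scheme \<Rightarrow> ('h \<Rightarrow> 'a::ring set) \<Rightarrow> 'h \<Rightarrow> 'a" where
  "eps H T h = (THE e. is_identity_of e (ring_prodset (T h) (T (inv\<^bsub>H\<^esub> h))))"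

definition epsilon_strong :: "('h, 'm) monoid_scheme \<Rightarrow> ('h \<Rightarrow> 'a::ring set) \<Rightarrow> bool" where
  "epsilon_strong H T \<longleftrightarrow> is_grading H T \<and>
     (\<forall>h\<in>carrier H. ring_prodset (ring_prodset (T h) (T (inv\<^bsub>H\<^esub> h))) (T h) = T h \<and>
        (\<exists>e. is_identity_of e (ring_prodset (T h) (T (inv\<^bsub>H\<^esub> h)))))"

text \<open>Finite joins (nonempty) of elements of E, with a \<or> b = a + b - a b.\<close>
inductive_set joins :: "'a::ring set \<Rightarrow> 'a set" for E where
  base: "e \<in> E \<Longrightarrow> e \<in> joins E"
| join: "a \<in> joins E \<Longrightarrow> b \<in> joins E \<Longrightarrow> a + b - a * b \<in> joins E"

definition epsilon_finite :: "('h, 'm) monoid_scheme \<Rightarrow> ('h \<Rightarrow> 'a::ring set) \<Rightarrow> bool" where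
  "epsilon_finite H T \<longleftrightarrow> epsilon_strong H T \<and> finite (joins (eps H T ` carrier H))"

definition induced :: "('g \<Rightarrow> 'a::ring set) \<Rightarrow> 'g set \<Rightarrow> 'a set" where
  "induced S C = {\<Sum>g\<in>F. f g | F f. finite F \<and> F \<subseteq> C \<and> (\<forall>g\<in>F. f g \<in> S g)}"

end

theory Submission
  imports Defs
begin

text \<open>For a coset C of N, the idempotents eps_g (g in C) commute: eps_g is the identity of
  the ring S_g S_(g^-1), which lies in S_1 and is stable under multiplication by S_1 on either
  side, so eps_g commutes with all of S_1. Their finite joins thus form a finite set of
  commuting idempotents closed under join, which has a greatest element e_C. Since
  eps_g <= e_C, the element e_C is a left identity on every S_g and a right identity on every
  S_(g^-1) with g in C; as it lies in the ring S_C S_(C^-1), it is the identity of that ring,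
  and S_C = e_C S_C gives S_C S_(C^-1) S_C = S_C. Each new epsilon e_C is a join of old ones,
  so all joins of the new epsilons stay in the finite set of joins of the old ones.\<close>

definition add_subgroup :: "'a::ab_group_add set \<Rightarrow> bool" where
  "add_subgroup M \<longleftrightarrow> 0 \<in> M \<and> (\<forall>x\<in>M. \<forall>y\<in>M. x - y \<in> M)"

lemma add_subgroup_zero: "add_subgroup M \<Longrightarrow> 0 \<in> M"
  by (simp add: add_subgroup_def)

lemma add_subgroup_diff: "add_subgroup M \<Longrightarrow> x \<in> M \<Longrightarrow> y \<in> M \<Longrightarrow> x - y \<in> M"
  by (simp add: add_subgroup_def)

lemma add_subgroup_uminus: "add_subgroup M \<Longrightarrow> x \<in> M \<Longrightarrow> - x \<in> M"
  using add_subgroup_diff[of M 0 x] add_subgroup_zero[of M] by simp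

lemma add_subgroup_add: "add_subgroup M \<Longrightarrow> x \<in> M \<Longrightarrow> y \<in> M \<Longrightarrow> x + y \<in> M"
  using add_subgroup_diff[of M x "- y"] add_subgroup_uminus[of M y] by simp

lemma add_subgroupI:
  assumes "0 \<in> M" "\<And>x y. x \<in> M \<Longrightarrow> y \<in> M \<Longrightarrow> x + y \<in> M" "\<And>x. x \<in> M \<Longrightarrow> - x \<in> M"
  shows "add_subgroup M"
  using assms by (metis add_subgroup_def diff_conv_add_uminus)

lemma ring_prodset_induct [consumes 1, case_names zero mult add]:
  assumes "x \<in> ring_prodset A B" "P 0" "\<And>a b. a \<in> A \<Longrightarrow> b \<in> B \<Longrightarrow> P (a * b)"
    "\<And>x y. P x \<Longrightarrow> P y \<Longrightarrow> P (x + y)"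
  shows "P x"
proof -
  obtain n :: nat and a b where x: "x = (\<Sum>i<n. a i * b i)" "\<forall>i<n. a i \<in> A \<and> b i \<in> B"
    using assms(1) unfolding ring_prodset_def by blast
  have "\<forall>i<m. a i \<in> A \<and> b i \<in> B \<Longrightarrow> P (\<Sum>i<m. a i * b i)" for m
    by (induction m) (auto simp: assms(2-4))
  then show ?thesis using x by auto
qed

lemma mult_mem_ring_prodset: "a \<in> A \<Longrightarrow> b \<in> B \<Longrightarrow> a * b \<in> ring_prodset A B"
  unfolding ring_prodset_def by (intro CollectI exI[of _ 1] exI[of _ "\<lambda>_. a"] exI[of _ "\<lambda>_. b"]) simp

lemma zero_mem_ring_prodset: "0 \<in> ring_prodset A B"
  unfolding ring_prodset_def by (intro CollectI exI[of _ 0]) simp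

lemma add_mem_ring_prodset:
  assumes "x \<in> ring_prodset A B" "y \<in> ring_prodset A B"
  shows "x + y \<in> ring_prodset A B"
proof -
  obtain n :: nat and a b where x: "x = (\<Sum>i<n. a i * b i)" "\<forall>i<n. a i \<in> A \<and> b i \<in> B"
    using assms(1) unfolding ring_prodset_def by blast
  obtain m :: nat and c d where y: "y = (\<Sum>i<m. c i * d i)" "\<forall>i<m. c i \<in> A \<and> d i \<in> B"
    using assms(2) unfolding ring_prodset_def by blast
  define a' where "a' i = (if i < n then a i else c (i - n))" for i
  define b' where "b' i = (if i < n then b i else d (i - n))" for i
  have "(\<Sum>i<n + m. a' i * b' i) = (\<Sum>i<n. a' i * b' i) + (\<Sum>i<m. a' (n + i) * b' (n + i))"
    by (induction m) (auto simp: add.assoc)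
  then have "x + y = (\<Sum>i<n + m. a' i * b' i)"
    by (simp add: x y a'_def b'_def)
  moreover have "\<forall>i<n + m. a' i \<in> A \<and> b' i \<in> B"
    using x y by (auto simp: a'_def b'_def)
  ultimately show ?thesis unfolding ring_prodset_def by blast
qed

lemma add_subgroup_ring_prodset: "add_subgroup A \<Longrightarrow> add_subgroup (ring_prodset A B)"
proof (rule add_subgroupI)
  show "- x \<in> ring_prodset A B" if "add_subgroup A" "x \<in> ring_prodset A B" for x
    using that(2)
  proof (induction rule: ring_prodset_induct)
    case (mult a b)
    then show ?case
      using mult_mem_ring_prodset[OF add_subgroup_uminus[OF that(1)]] by (metis minus_mult_left)
  next
    case (add x y)
    then show ?case using add_mem_ring_prodset by (metis minus_add_distrib)
  qed (simp add: zero_mem_ring_prodset)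
qed (simp_all add: zero_mem_ring_prodset add_mem_ring_prodset)

lemma ring_prodset_subset:
  assumes "add_subgroup M" "\<And>a b. a \<in> A \<Longrightarrow> b \<in> B \<Longrightarrow> a * b \<in> M"
  shows "ring_prodset A B \<subseteq> M"
  using ring_prodset_induct[where P = "\<lambda>x. x \<in> M"] assms add_subgroup_zero add_subgroup_add
  by blast

lemma identity_of_unique: "is_identity_of e A \<Longrightarrow> is_identity_of e' A \<Longrightarrow> e' = e"
  unfolding is_identity_of_def by metis

lemma eps_eqI:
  assumes "is_identity_of e (ring_prodset (T h) (T (inv\<^bsub>H\<^esub> h)))"
  shows "eps H T h = e"
  unfolding eps_def
proof (rule the_equality)
  show "is_identity_of e (ring_prodset (T h) (T (inv\<^bsub>H\<^esub> h)))" by (fact assms)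
  show "x = e" if "is_identity_of x (ring_prodset (T h) (T (inv\<^bsub>H\<^esub> h)))" for x
    using identity_of_unique[OF assms that] .
qed

subsection \<open>Finite joins of commuting idempotents\<close>

lemma joins_least:
  assumes "A \<subseteq> M" "\<And>a b. a \<in> M \<Longrightarrow> b \<in> M \<Longrightarrow> a + b - a * b \<in> M"
  shows "joins A \<subseteq> M"
proof
  show "x \<in> M" if "x \<in> joins A" for x
    using that by induction (use assms in auto)
qed

lemma joins_mono: "A \<subseteq> B \<Longrightarrow> joins A \<subseteq> joins B"
  by (rule joins_least) (auto intro: joins.intros)

text \<open>For commuting idempotents, \<open>a \<le> b \<longleftrightarrow> a * b = a\<close> is a partial order in which
  \<open>a + b - a * b\<close> is the join of \<open>a\<close> and \<open>b\<close>.\<close>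

definition comm_idempotents :: "'a::ring set \<Rightarrow> bool" where
  "comm_idempotents E \<longleftrightarrow> (\<forall>a\<in>E. a * a = a) \<and> (\<forall>a\<in>E. \<forall>b\<in>E. a * b = b * a)"

lemma comm_idempotents_subset: "comm_idempotents B \<Longrightarrow> A \<subseteq> B \<Longrightarrow> comm_idempotents A"
  unfolding comm_idempotents_def by blast

lemma commute_join:
  fixes a b c :: "'a::ring"
  assumes "c * a = a * c" "c * b = b * c"
  shows "c * (a + b - a * b) = (a + b - a * b) * c"
proof -
  have "c * (a * b) = (a * b) * c"
    by (metis assms mult.assoc)
  then show ?thesis
    by (simp add: assms distrib_left distrib_right right_diff_distrib left_diff_distrib)
qed

lemma commute_joins:
  assumes "\<And>e. e \<in> E \<Longrightarrow> c * e = e * c" "x \<in> joins E"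
  shows "c * x = x * c"
  using assms(2) by induction (simp_all add: assms(1) commute_join)

lemma idempotent_join:
  fixes a b :: "'a::ring"
  assumes "a * a = a" "b * b = b" "a * b = b * a"
  shows "(a + b - a * b) * (a + b - a * b) = a + b - a * b"
proof -
  have "a * (a * b) = a * b" "b * (a * b) = a * b" "a * b * a = a * b" "a * b * b = a * b"
    "a * b * (a * b) = a * b"
    by (metis assms mult.assoc)+
  then show ?thesis
    by (simp add: assms distrib_left distrib_right right_diff_distrib left_diff_distrib)
qed

lemma comm_idempotents_joins:
  assumes "comm_idempotents E"
  shows "comm_idempotents (joins E)"
proof -
  have commute_E: "e * a = a * e" if "e \<in> E" "a \<in> joins E" for e a
    using commute_joins[of E e a] assms that by (simp add: comm_idempotents_def)
  have comm: "a * b = b * a" if "a \<in> joins E" "b \<in> joins E" for a b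
    using commute_joins[of E a b] commute_E that by metis
  have "a * a = a" if "a \<in> joins E" for a
    using that
  proof induction
    case (join a b)
    then show ?case using idempotent_join comm by blast
  qed (use assms in \<open>simp add: comm_idempotents_def\<close>)
  with comm show ?thesis by (simp add: comm_idempotents_def)
qed

lemma below_join_left:
  fixes a b x :: "'a::ring"
  assumes "x * a = x"
  shows "x * (a + b - a * b) = x"
  using assms by (simp add: distrib_left right_diff_distrib flip: mult.assoc)

lemma comm_idempotents_upper_bound:
  assumes "comm_idempotents J" "\<And>a b. a \<in> J \<Longrightarrow> b \<in> J \<Longrightarrow> a + b - a * b \<in> J"
    and "finite F" "F \<noteq> {}" "F \<subseteq> J"
  shows "\<exists>j\<in>J. \<forall>a\<in>F. a * j = a"
  using assms(3-5)
proof (induction F rule: finite_ne_induct)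
  case (singleton a)
  then show ?case using assms(1) by (auto simp: comm_idempotents_def)
next
  case (insert b F)
  then obtain j where j: "j \<in> J" "\<forall>a\<in>F. a * j = a" by auto
  have b: "b \<in> J" "b * b = b" "b * j = j * b"
    using insert.prems j(1) assms(1) by (auto simp: comm_idempotents_def)
  have "b * (j + b - j * b) = b"
    using below_join_left[of b b j] b by (simp add: algebra_simps)
  moreover have "\<forall>a\<in>F. a * (j + b - j * b) = a"
    using j(2) below_join_left by blast
  ultimately show ?case using assms(2)[OF j(1) b(1)] by auto
qed

lemma finite_joins_greatest:
  assumes "comm_idempotents E" "finite (joins E)" "E \<noteq> {}"
  shows "\<exists>j\<in>joins E. \<forall>e\<in>E. e * j = e \<and> j * e = e"
proof -
  have J: "comm_idempotents (joins E)" using comm_idempotents_joins[OF assms(1)] .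
  have "joins E \<noteq> {}" using assms(3) joins.base by blast
  then obtain j where "j \<in> joins E" "\<forall>a\<in>joins E. a * j = a"
    using comm_idempotents_upper_bound[OF J joins.join assms(2)] by blast
  with J show ?thesis using joins.base by (metis comm_idempotents_def)
qed

subsection \<open>Induced gradings\<close>

lemma induced_induct [consumes 1, case_names zero homogeneous add]:
  assumes "x \<in> induced S C" "P 0" "\<And>g s. g \<in> C \<Longrightarrow> s \<in> S g \<Longrightarrow> P s"
    "\<And>x y. P x \<Longrightarrow> P y \<Longrightarrow> P (x + y)"
  shows "P x"
proof -
  obtain F f where x: "x = (\<Sum>g\<in>F. f g)" "finite F" "F \<subseteq> C" "\<forall>g\<in>F. f g \<in> S g"
    using assms(1) unfolding induced_def by auto
  have "finite F' \<Longrightarrow> F' \<subseteq> F \<Longrightarrow> P (\<Sum>g\<in>F'. f g)" for F'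
    by (induction F' rule: finite_induct) (use x assms(2-4) in auto)
  then show ?thesis using x by auto
qed

lemma homogeneous_mem_induced: "g \<in> C \<Longrightarrow> s \<in> S g \<Longrightarrow> s \<in> induced S C"
  unfolding induced_def by (intro CollectI exI[of _ "{g}"] exI[of _ "\<lambda>_. s"]) simp

lemma add_subgroup_induced:
  assumes "\<And>g. g \<in> C \<Longrightarrow> add_subgroup (S g)"
  shows "add_subgroup (induced S C)"
  unfolding add_subgroup_def
proof (intro conjI ballI)
  show "0 \<in> induced S C"
    unfolding induced_def by (intro CollectI exI[of _ "{}"]) simp
  fix x y assume "x \<in> induced S C" "y \<in> induced S C"
  then obtain F f F' f' where
    x: "x = (\<Sum>g\<in>F. f g)" "finite F" "F \<subseteq> C" "\<forall>g\<in>F. f g \<in> S g" and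
    y: "y = (\<Sum>g\<in>F'. f' g)" "finite F'" "F' \<subseteq> C" "\<forall>g\<in>F'. f' g \<in> S g"
    unfolding induced_def by auto
  define h where "h g = (if g \<in> F then f g else 0) - (if g \<in> F' then f' g else 0)" for g
  have "x - y = (\<Sum>g\<in>F \<union> F'. h g)"
    using x(1,2) y(1,2) by (simp add: h_def sum_subtractf sum.If_cases Int_absorb1 Int_absorb2)
  moreover have "\<forall>g\<in>F \<union> F'. h g \<in> S g"
    using x y assms by (auto simp: h_def intro!: add_subgroup_diff add_subgroup_zero add_subgroup_uminus)
  ultimately show "x - y \<in> induced S C"
    unfolding induced_def using x y by blast
qed

lemma carrier_FactGroup_rcosets: "carrier (G Mod N) = rcosets\<^bsub>G\<^esub> N"
  by (simp add: FactGroup_def)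

locale graded_group = group G for G :: "('g, 'm) monoid_scheme" (structure) +
  fixes S :: "'g \<Rightarrow> 'a::ring set"
  assumes grading: "is_grading G S"
begin

lemma add_subgroup_component: "g \<in> carrier G \<Longrightarrow> add_subgroup (S g)"
  using grading by (simp add: is_grading_def add_subgroup_def)

lemma component_mult:
  "g \<in> carrier G \<Longrightarrow> h \<in> carrier G \<Longrightarrow> x \<in> S g \<Longrightarrow> y \<in> S h \<Longrightarrow> x * y \<in> S (g \<otimes> h)"
  using grading by (simp add: is_grading_def)

lemma homogeneous_decomposition:
  "\<exists>F f. finite F \<and> F \<subseteq> carrier G \<and> (\<forall>g\<in>F. f g \<in> S g) \<and> x = (\<Sum>g\<in>F. f g)"
  using grading by (simp add: is_grading_def)

lemma homogeneous_components_unique: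
  assumes "finite F" "F \<subseteq> carrier G" "\<forall>g\<in>F. f g \<in> S g" "(\<Sum>g\<in>F. f g) = 0" "g \<in> F"
  shows "f g = 0"
  using grading assms unfolding is_grading_def by blast

lemma add_subgroup_induced_subset: "C \<subseteq> carrier G \<Longrightarrow> add_subgroup (induced S C)"
  by (rule add_subgroup_induced) (auto intro: add_subgroup_component)

lemma induced_mult:
  assumes C: "C \<subseteq> carrier G" and D: "D \<subseteq> carrier G"
    and x: "x \<in> induced S C" and y: "y \<in> induced S D"
  shows "x * y \<in> induced S (C <#> D)"
proof -
  have CD: "add_subgroup (induced S (C <#> D))"
    using add_subgroup_induced_subset setmult_subset_G C D by blast
  have "s * y \<in> induced S (C <#> D)" if g: "g \<in> C" and s: "s \<in> S g" for g s
    using y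
  proof (induction rule: induced_induct)
    case (homogeneous h t)
    then have "s * t \<in> S (g \<otimes> h)" using component_mult g s C D by blast
    moreover have "g \<otimes> h \<in> C <#> D" using g homogeneous(1) by (auto simp: set_mult_def)
    ultimately show ?case using homogeneous_mem_induced by metis
  qed (simp_all add: distrib_left add_subgroup_zero[OF CD] add_subgroup_add[OF CD])
  with x show ?thesis
    by (induction rule: induced_induct)
      (simp_all add: distrib_right add_subgroup_zero[OF CD] add_subgroup_add[OF CD])
qed

context
  fixes N assumes subgroup: "subgroup N G"
begin

lemma rcoset_subset_carrier: "C \<in> rcosets N \<Longrightarrow> C \<subseteq> carrier G"
  using rcosets_part_G[OF subgroup] by blast

lemma coset_decomposition:
  "\<exists>K \<phi>. finite K \<and> K \<subseteq> rcosets N \<and> (\<forall>C\<in>K. \<phi> C \<in> induced S C) \<and> x = (\<Sum>C\<in>K. \<phi> C)"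
proof -
  obtain F f where F: "finite F" "F \<subseteq> carrier G" "\<forall>h\<in>F. f h \<in> S h" "x = (\<Sum>h\<in>F. f h)"
    using homogeneous_decomposition by meson
  define K where "K = (\<lambda>h. N #> h) ` F"
  define \<phi> where "\<phi> C = (\<Sum>h\<in>{h\<in>F. N #> h = C}. f h)" for C
  have "x = (\<Sum>C\<in>K. \<phi> C)"
    unfolding \<phi>_def K_def F(4) by (rule sum.group[symmetric]) (use F in auto)
  moreover have "finite K" "K \<subseteq> rcosets N"
    unfolding K_def using F rcosetsI subgroup.subset[OF subgroup] by auto
  moreover have "\<phi> C \<in> induced S C" if "C \<in> K" for C
  proof -
    have "{h\<in>F. N #> h = C} \<subseteq> C" using rcos_self subgroup F(2) by blast
    then show ?thesis
      unfolding \<phi>_def induced_def using F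
      by (intro CollectI exI[of _ "{h\<in>F. N #> h = C}"] exI[of _ f]) auto
  qed
  ultimately show ?thesis by blast
qed

lemma rcoset_eq_rcos_mem:
  assumes "C \<in> rcosets N" "g \<in> C"
  shows "N #> g = C"
proof -
  obtain a where "a \<in> carrier G" "C = N #> a"
    using assms(1) unfolding RCOSETS_def by blast
  then show ?thesis using repr_independence assms(2) subgroup by simp
qed

lemma coset_components_unique:
  assumes K: "finite K" "K \<subseteq> rcosets N" and \<phi>: "\<forall>C\<in>K. \<phi> C \<in> induced S C"
    and sum_zero: "(\<Sum>C\<in>K. \<phi> C) = 0" and "C \<in> K"
  shows "\<phi> C = 0"
proof -
  have "\<forall>C\<in>K. \<exists>F f. finite F \<and> F \<subseteq> C \<and> (\<forall>g\<in>F. f g \<in> S g) \<and> \<phi> C = (\<Sum>g\<in>F. f g)"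
    using \<phi> unfolding induced_def by fastforce
  then obtain FF ff where FF: "\<And>D. D \<in> K \<Longrightarrow> finite (FF D) \<and> FF D \<subseteq> D \<and>
      (\<forall>g\<in>FF D. ff D g \<in> S g) \<and> \<phi> D = (\<Sum>g\<in>FF D. ff D g)"
    by metis
  define U where "U = \<Union>(FF ` K)"
  \<comment> \<open>well defined on \<open>U\<close>, since the supports \<open>FF D\<close> lie in the pairwise disjoint cosets \<open>D\<close>\<close>
  define \<psi> where "\<psi> g = ff (N #> g) g" for g
  have coset_of_support: "N #> g = D" if "D \<in> K" "g \<in> FF D" for D g
    using rcoset_eq_rcos_mem FF K(2) that by blast
  have \<phi>_eq: "\<phi> D = (\<Sum>g\<in>FF D. \<psi> g)" if "D \<in> K" for D
    using FF[OF that] coset_of_support[OF that] by (simp add: \<psi>_def)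
  have "\<forall>D\<in>K. \<forall>D'\<in>K. D \<noteq> D' \<longrightarrow> FF D \<inter> FF D' = {}"
    using coset_of_support by blast
  then have "(\<Sum>g\<in>U. \<psi> g) = (\<Sum>D\<in>K. \<Sum>g\<in>FF D. \<psi> g)"
    unfolding U_def using FF by (intro sum.UNION_disjoint[OF K(1)]) auto
  also have "\<dots> = (\<Sum>D\<in>K. \<phi> D)"
    using \<phi>_eq by simp
  finally have "(\<Sum>g\<in>U. \<psi> g) = (\<Sum>D\<in>K. \<phi> D)" .
  moreover have "finite U" "U \<subseteq> carrier G" "\<forall>g\<in>U. \<psi> g \<in> S g"
    unfolding U_def using K FF rcoset_subset_carrier coset_of_support
    by (fastforce simp: \<psi>_def)+
  ultimately have "\<psi> g = 0" if "g \<in> U" for g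
    using homogeneous_components_unique sum_zero that by metis
  then show ?thesis using \<phi>_eq \<open>C \<in> K\<close> unfolding U_def by (metis UN_I sum.neutral)
qed

lemma is_grading_induced: "is_grading (G Mod N) (induced S)"
  unfolding is_grading_def carrier_FactGroup_rcosets
proof (intro conjI ballI allI impI)
  fix C assume "C \<in> rcosets N"
  then have "add_subgroup (induced S C)"
    using add_subgroup_induced_subset rcoset_subset_carrier by blast
  then show "0 \<in> induced S C" "\<And>x y. x \<in> induced S C \<Longrightarrow> y \<in> induced S C \<Longrightarrow> x - y \<in> induced S C"
    by (simp_all add: add_subgroup_def)
next
  fix C D x y assume "C \<in> rcosets N" "D \<in> rcosets N" "x \<in> induced S C" "y \<in> induced S D"
  then show "x * y \<in> induced S (C \<otimes>\<^bsub>G Mod N\<^esub> D)"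
    using induced_mult rcoset_subset_carrier by simp
next
  fix x
  show "\<exists>K \<phi>. finite K \<and> K \<subseteq> rcosets N \<and> (\<forall>C\<in>K. \<phi> C \<in> induced S C) \<and> x = (\<Sum>C\<in>K. \<phi> C)"
    by (rule coset_decomposition)
next
  fix K \<phi> C
  assume "finite K \<and> K \<subseteq> rcosets N \<and> (\<forall>C\<in>K. \<phi> C \<in> induced S C) \<and> sum \<phi> K = 0" "C \<in> K"
  then show "\<phi> C = 0"
    using coset_components_unique by blast
qed

end

end

subsection \<open>Epsilon-strong gradings\<close>

locale epsilon_strong_graded_group = graded_group +
  assumes epsilon_strong: "epsilon_strong G S"
begin

abbreviation \<epsilon> where "\<epsilon> g \<equiv> eps G S g"

lemma eps_identity:
  assumes "g \<in> carrier G"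
  shows "is_identity_of (\<epsilon> g) (ring_prodset (S g) (S (inv g)))"
proof -
  obtain e where e: "is_identity_of e (ring_prodset (S g) (S (inv g)))"
    using epsilon_strong assms unfolding epsilon_strong_def by blast
  then show ?thesis using eps_eqI[OF e] by simp
qed

lemma eps_mem: "g \<in> carrier G \<Longrightarrow> \<epsilon> g \<in> ring_prodset (S g) (S (inv g))"
  using eps_identity unfolding is_identity_of_def by blast

lemma eps_mem_component_one:
  assumes g: "g \<in> carrier G"
  shows "\<epsilon> g \<in> S \<one>"
proof -
  have "ring_prodset (S g) (S (inv g)) \<subseteq> S \<one>"
    using component_mult[OF g inv_closed[OF g]] g
    by (intro ring_prodset_subset add_subgroup_component) simp_all
  then show ?thesis using eps_mem[OF g] by blast
qed

lemma eps_commute_component_one: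
  assumes g: "g \<in> carrier G" and s: "s \<in> S \<one>"
  shows "s * \<epsilon> g = \<epsilon> g * s"
proof -
  let ?R = "ring_prodset (S g) (S (inv g))"
  have left: "s * \<epsilon> g \<in> ?R"
    using eps_mem[OF g]
  proof (induction rule: ring_prodset_induct)
    case (mult a b)
    have "s * a \<in> S g" using component_mult[OF one_closed g s mult(1)] g by simp
    then show ?case using mult_mem_ring_prodset[OF _ mult(2)] by (metis mult.assoc)
  qed (simp_all add: zero_mem_ring_prodset add_mem_ring_prodset distrib_left)
  have right: "\<epsilon> g * s \<in> ?R"
    using eps_mem[OF g]
  proof (induction rule: ring_prodset_induct)
    case (mult a b)
    have "b * s \<in> S (inv g)" using component_mult[OF inv_closed[OF g] one_closed mult(2) s] g by simp
    then show ?case using mult_mem_ring_prodset[OF mult(1)] by (simp add: mult.assoc)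
  qed (simp_all add: zero_mem_ring_prodset add_mem_ring_prodset distrib_right)
  have "s * \<epsilon> g = \<epsilon> g * (s * \<epsilon> g)"
    using eps_identity[OF g] left by (simp add: is_identity_of_def)
  also have "\<dots> = (\<epsilon> g * s) * \<epsilon> g"
    by (simp add: mult.assoc)
  also have "\<dots> = \<epsilon> g * s"
    using eps_identity[OF g] right by (simp add: is_identity_of_def)
  finally show ?thesis .
qed

lemma comm_idempotents_eps: "comm_idempotents (\<epsilon> ` carrier G)"
  unfolding comm_idempotents_def
proof (intro conjI ballI)
  fix a b assume "a \<in> \<epsilon> ` carrier G" "b \<in> \<epsilon> ` carrier G"
  then obtain g h where g: "g \<in> carrier G" "a = \<epsilon> g" and h: "h \<in> carrier G" "b = \<epsilon> h"
    by blast
  show "a * b = b * a"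
    using eps_commute_component_one[OF h(1) eps_mem_component_one[OF g(1)]] g(2) h(2) by simp
next
  fix a assume "a \<in> \<epsilon> ` carrier G"
  then obtain g where g: "g \<in> carrier G" "a = \<epsilon> g" by blast
  show "a * a = a"
    using eps_identity[OF g(1)] eps_mem[OF g(1)] g(2) by (simp add: is_identity_of_def)
qed

lemma component_triple_product:
  "g \<in> carrier G \<Longrightarrow> ring_prodset (ring_prodset (S g) (S (inv g))) (S g) = S g"
  using epsilon_strong by (simp add: epsilon_strong_def)

lemma eps_mult_component: assumes g: "g \<in> carrier G" and s: "s \<in> S g" shows "\<epsilon> g * s = s"
proof -
  have "s \<in> ring_prodset (ring_prodset (S g) (S (inv g))) (S g)"
    using component_triple_product g s by simp
  then show ?thesis
  proof (induction rule: ring_prodset_induct)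
    case (mult r c)
    then have "\<epsilon> g * r = r" using eps_identity[OF g] by (simp add: is_identity_of_def)
    then show ?case by (simp flip: mult.assoc)
  qed (simp_all add: distrib_left)
qed

lemma component_inv_mult_eps: assumes g: "g \<in> carrier G" and s: "s \<in> S (inv g)" shows "s * \<epsilon> g = s"
proof -
  have "s \<in> ring_prodset (ring_prodset (S (inv g)) (S g)) (S (inv g))"
    using component_triple_product[OF inv_closed[OF g]] s by (simp add: g)
  then show ?thesis
  proof (induction rule: ring_prodset_induct)
    case (mult r c)
    from mult(1) show ?case
    proof (induction rule: ring_prodset_induct)
      case (mult a b)
      have "b * c * \<epsilon> g = b * c"
        using eps_identity[OF g] mult_mem_ring_prodset[OF mult(2) \<open>c \<in> S (inv g)\<close>]
        by (simp add: is_identity_of_def)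
      then show ?case by (simp add: mult.assoc)
    qed (simp_all add: distrib_right)
  qed (simp_all add: distrib_right)
qed

lemma left_unit_induced:
  assumes "C \<subseteq> carrier G" "\<forall>g\<in>C. e * \<epsilon> g = \<epsilon> g" "x \<in> induced S C"
  shows "e * x = x"
  using assms(3)
proof (induction rule: induced_induct)
  case (homogeneous g s)
  then have "g \<in> carrier G" using assms(1) by blast
  then have "e * s = (e * \<epsilon> g) * s" using eps_mult_component homogeneous(2) by (simp add: mult.assoc)
  also have "\<dots> = s" using assms(2) homogeneous \<open>g \<in> carrier G\<close> eps_mult_component by simp
  finally show ?case .
qed (simp_all add: distrib_left)

lemma right_unit_induced_set_inv:
  assumes "C \<subseteq> carrier G" "\<forall>g\<in>C. \<epsilon> g * e = \<epsilon> g" "y \<in> induced S (set_inv C)"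
  shows "y * e = y"
  using assms(3)
proof (induction rule: induced_induct)
  case (homogeneous k t)
  then obtain g where g: "g \<in> C" "k = inv g" by (auto simp: SET_INV_def)
  then have "g \<in> carrier G" using assms(1) by blast
  then have "t * e = t * (\<epsilon> g * e)"
    using component_inv_mult_eps homogeneous(2) g(2) by (metis mult.assoc)
  also have "\<dots> = t" using assms(2) g homogeneous(2) \<open>g \<in> carrier G\<close> component_inv_mult_eps by simp
  finally show ?case .
qed (simp_all add: distrib_right)

context
  fixes N assumes normal: "N \<lhd> G"
begin

lemma rcoset_mult_set_inv: assumes "C \<in> rcosets N" shows "C <#> set_inv C = N"
proof -
  have "C \<in> carrier (G Mod N)" using assms by (simp only: carrier_FactGroup_rcosets)
  then have "C \<otimes>\<^bsub>G Mod N\<^esub> inv\<^bsub>G Mod N\<^esub> C = \<one>\<^bsub>G Mod N\<^esub>"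
    using group.r_inv[OF normal.factorgroup_is_group[OF normal]] by blast
  then show ?thesis using normal.inv_FactGroup[OF normal \<open>C \<in> carrier (G Mod N)\<close>] by simp
qed

lemma prodset_rcoset_mult_induced:
  assumes C: "C \<in> rcosets N"
    and r: "r \<in> ring_prodset (induced S C) (induced S (set_inv C))" and c: "c \<in> induced S C"
  shows "r * c \<in> induced S C"
proof -
  have N: "subgroup N G" using normal normal_imp_subgroup by blast
  have C_inv: "set_inv C \<in> rcosets N" using normal.setinv_closed[OF normal C] .
  have "ring_prodset (induced S C) (induced S (set_inv C)) \<subseteq> induced S N"
    using induced_mult[of C "set_inv C"] rcoset_subset_carrier[OF N] C C_inv rcoset_mult_set_inv[OF C]
      add_subgroup_induced_subset subgroup.subset[OF N]
    by (intro ring_prodset_subset) auto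
  then have "r * c \<in> induced S (N <#> C)"
    using induced_mult subgroup.subset[OF N] rcoset_subset_carrier[OF N C] r c by blast
  then show ?thesis using normal.rcosets_mult_eq[OF normal C] by simp
qed

lemma prodset_rcoset_mult_closed:
  assumes C: "C \<in> rcosets N"
    and x: "x \<in> ring_prodset (induced S C) (induced S (set_inv C))"
    and y: "y \<in> ring_prodset (induced S C) (induced S (set_inv C))"
  shows "x * y \<in> ring_prodset (induced S C) (induced S (set_inv C))"
  using y
proof (induction rule: ring_prodset_induct)
  case (mult a b)
  then show ?case
    using mult_mem_ring_prodset[OF prodset_rcoset_mult_induced[OF C x mult(1)] mult(2)]
    by (simp add: mult.assoc)
qed (simp_all add: zero_mem_ring_prodset add_mem_ring_prodset distrib_left)

lemma joins_eps_subset_prodset_rcoset: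
  assumes C: "C \<in> rcosets N"
  shows "joins (\<epsilon> ` C) \<subseteq> ring_prodset (induced S C) (induced S (set_inv C))"
proof (rule joins_least)
  have N: "subgroup N G" using normal normal_imp_subgroup by blast
  let ?R = "ring_prodset (induced S C) (induced S (set_inv C))"
  have R: "add_subgroup ?R"
    using add_subgroup_ring_prodset add_subgroup_induced_subset rcoset_subset_carrier[OF N C] by blast
  show "\<epsilon> ` C \<subseteq> ?R"
  proof
    fix x assume "x \<in> \<epsilon> ` C"
    then obtain g where g: "g \<in> C" "x = \<epsilon> g" by blast
    have "inv g \<in> set_inv C" using g(1) by (auto simp: SET_INV_def)
    then have "ring_prodset (S g) (S (inv g)) \<subseteq> ?R"
      using g(1) R by (intro ring_prodset_subset) (auto intro: mult_mem_ring_prodset homogeneous_mem_induced)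
    then show "x \<in> ?R" using eps_mem g rcoset_subset_carrier[OF N C] by blast
  qed
  show "a + b - a * b \<in> ?R" if "a \<in> ?R" "b \<in> ?R" for a b
    using that R prodset_rcoset_mult_closed[OF C] by (intro add_subgroup_diff add_subgroup_add)
qed

lemma quotient_inv_eq_set_inv: "C \<in> rcosets N \<Longrightarrow> inv\<^bsub>G Mod N\<^esub> C = set_inv C"
  by (rule normal.inv_FactGroup[OF normal]) (simp only: carrier_FactGroup_rcosets)

lemma quotient_component_identity:
  assumes "C \<in> carrier (G Mod N)" and fin: "finite (joins (\<epsilon> ` carrier G))"
  obtains e where "e \<in> joins (\<epsilon> ` C)"
    "is_identity_of e (ring_prodset (induced S C) (induced S (inv\<^bsub>G Mod N\<^esub> C)))"
    "ring_prodset (ring_prodset (induced S C) (induced S (inv\<^bsub>G Mod N\<^esub> C))) (induced S C)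
      = induced S C"
proof -
  have C: "C \<in> rcosets N" using assms(1) by (simp only: carrier_FactGroup_rcosets)
  have N: "subgroup N G" using normal normal_imp_subgroup by blast
  let ?R = "ring_prodset (induced S C) (induced S (set_inv C))"
  have C_carrier: "C \<subseteq> carrier G" using rcoset_subset_carrier[OF N C] .
  have "comm_idempotents (\<epsilon> ` C)"
    using comm_idempotents_subset[OF comm_idempotents_eps] C_carrier by blast
  moreover have "finite (joins (\<epsilon> ` C))"
    using finite_subset[OF joins_mono fin] C_carrier by blast
  moreover have "C \<noteq> {}"
    using C rcos_self[OF _ N] unfolding RCOSETS_def by blast
  ultimately obtain e where e: "e \<in> joins (\<epsilon> ` C)" "\<forall>g\<in>C. \<epsilon> g * e = \<epsilon> g \<and> e * \<epsilon> g = \<epsilon> g"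
    using finite_joins_greatest by blast
  have left: "e * x = x" if "x \<in> induced S C" for x
    using left_unit_induced C_carrier e(2) that by blast
  have right: "y * e = y" if "y \<in> induced S (set_inv C)" for y
    using right_unit_induced_set_inv C_carrier e(2) that by blast
  have "e * x = x \<and> x * e = x" if "x \<in> ?R" for x
    using that
  proof (induction rule: ring_prodset_induct)
    case (mult a b)
    have "e * (a * b) = a * b" using left[OF mult(1)] by (simp flip: mult.assoc)
    moreover have "a * b * e = a * b" using right[OF mult(2)] by (simp add: mult.assoc)
    ultimately show ?case ..
  qed (simp_all add: distrib_left distrib_right)
  then have "is_identity_of e ?R"
    using joins_eps_subset_prodset_rcoset[OF C] e(1) unfolding is_identity_of_def by blast
  moreover have "ring_prodset ?R (induced S C) = induced S C"
  proof
    show "ring_prodset ?R (induced S C) \<subseteq> induced S C"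
      using add_subgroup_induced_subset[OF C_carrier] prodset_rcoset_mult_induced[OF C]
      by (rule ring_prodset_subset)
    show "induced S C \<subseteq> ring_prodset ?R (induced S C)"
    proof
      fix s assume "s \<in> induced S C"
      then show "s \<in> ring_prodset ?R (induced S C)"
        using mult_mem_ring_prodset[of e ?R s] \<open>is_identity_of e ?R\<close> left
        unfolding is_identity_of_def by simp
    qed
  qed
  ultimately show ?thesis using that e(1) quotient_inv_eq_set_inv[OF C] by simp
qed

lemma epsilon_strong_quotient:
  assumes "finite (joins (\<epsilon> ` carrier G))"
  shows "epsilon_strong (G Mod N) (induced S)"
  unfolding epsilon_strong_def
proof (intro conjI ballI)
  show "is_grading (G Mod N) (induced S)"
    using is_grading_induced normal normal_imp_subgroup by blast
  fix C assume C: "C \<in> carrier (G Mod N)"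
  show "ring_prodset (ring_prodset (induced S C) (induced S (inv\<^bsub>G Mod N\<^esub> C))) (induced S C)
      = induced S C"
    by (rule quotient_component_identity[OF C assms])
  show "\<exists>e. is_identity_of e (ring_prodset (induced S C) (induced S (inv\<^bsub>G Mod N\<^esub> C)))"
    by (rule quotient_component_identity[OF C assms]) blast
qed

lemma eps_quotient_mem_joins:
  assumes "finite (joins (\<epsilon> ` carrier G))" "C \<in> carrier (G Mod N)"
  shows "eps (G Mod N) (induced S) C \<in> joins (\<epsilon> ` carrier G)"
proof -
  obtain e where e_joins: "e \<in> joins (\<epsilon> ` C)"
    and e: "is_identity_of e (ring_prodset (induced S C) (induced S (inv\<^bsub>G Mod N\<^esub> C)))"
    by (rule quotient_component_identity[OF assms(2,1)])
  have "eps (G Mod N) (induced S) C = e"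
    using eps_eqI[OF e] .
  moreover have "joins (\<epsilon> ` C) \<subseteq> joins (\<epsilon> ` carrier G)"
    using assms(2) rcoset_subset_carrier[OF normal_imp_subgroup[OF normal]]
    by (intro joins_mono image_mono) (simp add: carrier_FactGroup_rcosets)
  ultimately show ?thesis using e_joins by blast
qed

end

end

theorem proposition6p3:
  fixes G :: "('g, 'm) monoid_scheme" and S :: "'g \<Rightarrow> 'a::ring set" and N :: "'g set"
  assumes "group G"
    and "epsilon_finite G S"
    and "N \<lhd> G"
  shows "epsilon_finite (G Mod N) (induced S)"
proof -
  have strong: "epsilon_strong G S" and fin: "finite (joins (eps G S ` carrier G))"
    using assms(2) by (simp_all add: epsilon_finite_def)
  interpret epsilon_strong_graded_group G S
    using assms(1) strong
    by (simp add: epsilon_strong_graded_group_def epsilon_strong_graded_group_axioms_def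
        graded_group_def graded_group_axioms_def epsilon_strong_def)
  have "joins (eps (G Mod N) (induced S) ` carrier (G Mod N)) \<subseteq> joins (\<epsilon> ` carrier G)"
  proof (rule joins_least)
    show "eps (G Mod N) (induced S) ` carrier (G Mod N) \<subseteq> joins (\<epsilon> ` carrier G)"
      using eps_quotient_mem_joins[OF assms(3) fin] by blast
  qed (rule joins.join)
  then show ?thesis
    using epsilon_strong_quotient[OF assms(3) fin] finite_subset[OF _ fin]
    by (simp add: epsilon_finite_def)
qed

end
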